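(* Let $E$ be an arbitrary directed graph, let $c$ be a cycle without exits in $E$, and let $H=\overline{c^0}$ be the saturated closure of the set $c^0$ of vertices of $c$. The following are equivalent: (i) $|F_E(c^0)|<\infty$; (ii) $H$ satisfies Condition (F) and $B_H=\emptyset$.
   Context: Let $E=(E^0,E^1,r,s)$ be a directed graph. A vertex $v$ is an infinite emitter if $s^{-1}(v)$ is infinite ($\mathrm{Inf}(E)$ is the set of them) and regular if $0<|s^{-1}(v)|<\infty$. Paths $\mu=\mu_1\cdots\mu_n$ ($r(\mu_i)=s(\mu_{i+1})$), $s(\mu)=s(\mu_1)$, $r(\mu)=r(\mu_n)$, $|\mu|=n$; vertices are paths of length $0$; $\mathrm{Path}(E)$ is the set of finite paths. A cycle is a path $c=e_1\cdots e_n$, $n\ge1$, with $r(e_n)=s(e_1)$ and $s(e_i)\neq s(e_j)$ for $i\ne j$; $c^0$ denotes its set of vertices. An exit of $c$ is an edge $e$ with $s(e)=s(e_i)$ for some $i$ and $e\neq e_i$; $c$ is without exits if it has none. $H\subseteq E^0$ is hereditary if $v\in H$ and a path from $v$ to $w$ imply $w\in H$; saturated if every regular $v$ with $r(s^{-1}(v))\subseteq H$ lies in $H$. The saturated closure $\overline{Y}$ of a hereditary set $Y$ is the smallest hereditary saturated set containing $Y$. For $Y\subseteq E^0$, $F_E(Y)$ is the set of paths $\alpha$ of length $\ge1$ with $s(\alpha_1)\notin Y$, $r(\alpha_i)\notin Y$ for $i<|\alpha|$, $r(\alpha_{|\alpha|})\in Y$. For hereditary saturated $H$, $B_H=\{v\in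 E^0\setminus H: v\in\mathrm{Inf}(E),\ 0<|s^{-1}(v)\cap r^{-1}(E^0\setminus H)|<\infty\}$ and $F'_E(H)=\{\alpha\in F_E(H): s(\alpha_{|\alpha|})\notin B_H\}$. $H$ satisfies Condition (F) if $H\cup F'_E(H)\cup\{\alpha\in\mathrm{Path}(E): r(\alpha)\in B_H\}$ is a finite set. *)

theory Defs
  imports Main
begin

record ('v, 'e) dgraph =
  verts :: "'v set"
  edges :: "'e set"
  rng :: "'e \<Rightarrow> 'v"
  src :: "'e \<Rightarrow> 'v"

definition wf_graph :: "('v, 'e) dgraph \<Rightarrow> bool" where
  "wf_graph E \<longleftrightarrow> (\<forall>e\<in>edges E. src E e \<in> verts E \<and> rng E e \<in> verts E)"

definition src_inv :: "('v, 'e) dgraph \<Rightarrow> 'v \<Rightarrow> 'e set" where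
  "src_inv E v = {e \<in> edges E. src E e = v}"

definition Inf_emitters :: "('v, 'e) dgraph \<Rightarrow> 'v set" where
  "Inf_emitters E = {v \<in> verts E. infinite (src_inv E v)}"

definition regular :: "('v, 'e) dgraph \<Rightarrow> 'v \<Rightarrow> bool" where
  "regular E v \<longleftrightarrow> src_inv E v \<noteq> {} \<and> finite (src_inv E v)"

definition epath :: "('v, 'e) dgraph \<Rightarrow> 'e list \<Rightarrow> bool" where
  "epath E \<alpha> \<longleftrightarrow> \<alpha> \<noteq> [] \<and> set \<alpha> \<subseteq> edges E \<and>
     (\<forall>i. Suc i < length \<alpha> \<longrightarrow> rng E (\<alpha> ! i) = src E (\<alpha> ! Suc i))"

text \<open>All finite paths: a path is a pair (source, edge list); vertices are (v, []).\<close>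
definition Path :: "('v, 'e) dgraph \<Rightarrow> ('v \<times> 'e list) set" where
  "Path E = {(v, []) | v. v \<in> verts E} \<union> {(src E (hd \<alpha>), \<alpha>) | \<alpha>. epath E \<alpha>}"

definition prange :: "('v, 'e) dgraph \<Rightarrow> ('v \<times> 'e list) \<Rightarrow> 'v" where
  "prange E p = (if snd p = [] then fst p else rng E (last (snd p)))"

definition is_cycle :: "('v, 'e) dgraph \<Rightarrow> 'e list \<Rightarrow> bool" where
  "is_cycle E c \<longleftrightarrow> epath E c \<and> rng E (last c) = src E (hd c) \<and>
     (\<forall>i j. i < length c \<longrightarrow> j < length c \<longrightarrow> i \<noteq> j \<longrightarrow> src E (c ! i) \<noteq> src E (c ! j))"

definition cycle_verts :: "('v, 'e) dgraph \<Rightarrow> 'e list \<Rightarrow> 'v set" where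
  "cycle_verts E c = src E ` set c"

definition is_exit :: "('v, 'e) dgraph \<Rightarrow> 'e list \<Rightarrow> 'e \<Rightarrow> bool" where
  "is_exit E c e \<longleftrightarrow> e \<in> edges E \<and> (\<exists>i < length c. src E e = src E (c ! i) \<and> e \<noteq> c ! i)"

definition no_exits :: "('v, 'e) dgraph \<Rightarrow> 'e list \<Rightarrow> bool" where
  "no_exits E c \<longleftrightarrow> (\<forall>e. \<not> is_exit E c e)"

definition hereditary :: "('v, 'e) dgraph \<Rightarrow> 'v set \<Rightarrow> bool" where
  "hereditary E H \<longleftrightarrow> (\<forall>p \<in> Path E. fst p \<in> H \<longrightarrow> prange E p \<in> H)"

definition saturated :: "('v, 'e) dgraph \<Rightarrow> 'v set \<Rightarrow> bool" where
  "saturated E H \<longleftrightarrow> (\<forall>v \<in> verts E. regular E v \<and> rng E ` src_inv E v \<subseteq> H \<longrightarrow> v \<in> H)"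

definition sat_closure :: "('v, 'e) dgraph \<Rightarrow> 'v set \<Rightarrow> 'v set" where
  "sat_closure E Y = \<Inter>{H. H \<subseteq> verts E \<and> Y \<subseteq> H \<and> hereditary E H \<and> saturated E H}"

definition F_E :: "('v, 'e) dgraph \<Rightarrow> 'v set \<Rightarrow> 'e list set" where
  "F_E E Y = {\<alpha>. epath E \<alpha> \<and> src E (hd \<alpha>) \<notin> Y \<and>
      (\<forall>i. Suc i < length \<alpha> \<longrightarrow> rng E (\<alpha> ! i) \<notin> Y) \<and> rng E (last \<alpha>) \<in> Y}"

definition B_H :: "('v, 'e) dgraph \<Rightarrow> 'v set \<Rightarrow> 'v set" where
  "B_H E H = {v \<in> verts E - H. v \<in> Inf_emitters E \<and>
      finite {e \<in> src_inv E v. rng E e \<notin> H} \<and> card {e \<in> src_inv E v. rng E e \<notin> H} > 0}"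

definition F'_E :: "('v, 'e) dgraph \<Rightarrow> 'v set \<Rightarrow> 'e list set" where
  "F'_E E H = {\<alpha> \<in> F_E E H. src E (last \<alpha>) \<notin> B_H E H}"

definition condition_F :: "('v, 'e) dgraph \<Rightarrow> 'v set \<Rightarrow> bool" where
  "condition_F E H \<longleftrightarrow> finite ({(v, []) | v. v \<in> H} \<union> {(src E (hd \<alpha>), \<alpha>) | \<alpha>. \<alpha> \<in> F'_E E H}
      \<union> {p \<in> Path E. prange E p \<in> B_H E H})"

end

theory Submission
  imports Defs
begin

(* Only two properties of the vertex set Y of c are used: Y is finite and hereditary (c has no
   exits). Let F_E(Y)_v be the set of paths in F_E(Y) starting at v, and H the saturated closure
   of Y. The properties "F_E(Y)_v is finite" and "v is in Y or F_E(Y)_v is nonempty" hold on Y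
   and pass from the successors of a regular vertex to the vertex itself, so they hold on all
   of H. Consequently every edge from outside Y into H starts a path of F_E(Y). If F_E(Y) is
   finite, this bounds the edges into H from any vertex, so B_H is empty; H is contained in Y
   together with the sources of F_E(Y); and every path of F_E(H) is a prefix of a path of
   F_E(Y). Conversely, a path of F_E(Y) either starts in H or is a path of F_E(H) ending at
   some w in H followed by a path of F_E(Y)_w, and there are only finitely many of these when
   H and F_E(H) are finite. *)

lemma not_epath_Nil [simp]: "\<not> epath E []"
  by (simp add: epath_def)

lemma epath_Cons:
  "epath E (e # \<alpha>) \<longleftrightarrow> e \<in> edges E \<and> (\<alpha> \<noteq> [] \<longrightarrow> epath E \<alpha> \<and> rng E e = src E (hd \<alpha>))"
  by (auto simp: epath_def nth_Cons hd_conv_nth split: nat.splits)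

lemma epath_append:
  "epath E \<alpha> \<Longrightarrow> epath E \<beta> \<Longrightarrow> rng E (last \<alpha>) = src E (hd \<beta>) \<Longrightarrow> epath E (\<alpha> @ \<beta>)"
proof (induction \<alpha>)
  case (Cons e \<alpha>)
  then show ?case by (cases "\<alpha> = []") (auto simp: epath_Cons)
qed simp

lemma rng_last_epath_in_closed_set:
  assumes "\<forall>e\<in>edges E. src E e \<in> S \<longrightarrow> rng E e \<in> S" "epath E \<alpha>" "src E (hd \<alpha>) \<in> S"
  shows "rng E (last \<alpha>) \<in> S"
  using assms(2,3) by (induction \<alpha>) (use assms(1) in \<open>auto simp: epath_Cons\<close>)

lemma hereditary_iff_edges:
  "hereditary E H \<longleftrightarrow> (\<forall>e\<in>edges E. src E e \<in> H \<longrightarrow> rng E e \<in> H)"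
proof
  assume "hereditary E H"
  moreover have "(src E e, [e]) \<in> Path E" if "e \<in> edges E" for e
    using that by (auto simp: Path_def epath_Cons)
  ultimately show "\<forall>e\<in>edges E. src E e \<in> H \<longrightarrow> rng E e \<in> H"
    by (force simp: hereditary_def prange_def)
next
  assume "\<forall>e\<in>edges E. src E e \<in> H \<longrightarrow> rng E e \<in> H"
  then show "hereditary E H"
    by (auto simp: hereditary_def Path_def prange_def dest: rng_last_epath_in_closed_set)
qed

lemma F_E_iff:
  "\<alpha> \<in> F_E E Y \<longleftrightarrow> epath E \<alpha> \<and> (\<forall>e\<in>set \<alpha>. src E e \<notin> Y) \<and> rng E (last \<alpha>) \<in> Y"
proof -
  have "(\<forall>j < length \<alpha>. src E (\<alpha> ! j) \<notin> Y) \<longleftrightarrow>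
      src E (hd \<alpha>) \<notin> Y \<and> (\<forall>i. Suc i < length \<alpha> \<longrightarrow> rng E (\<alpha> ! i) \<notin> Y)" if "epath E \<alpha>"
    using that by (metis epath_def hd_conv_nth length_greater_0_conv not0_implies_Suc)
  then show ?thesis
    by (auto simp: F_E_def all_set_conv_all_nth)
qed

definition F_E_from :: "('v, 'e) dgraph \<Rightarrow> 'v set \<Rightarrow> 'v \<Rightarrow> 'e list set" where
  "F_E_from E Y v = {\<gamma> \<in> F_E E Y. src E (hd \<gamma>) = v}"

lemma F_E_not_Nil: "\<alpha> \<in> F_E E Y \<Longrightarrow> \<alpha> \<noteq> []"
  by (auto simp: F_E_def)

lemma F_E_from_eq_empty: "v \<in> Y \<Longrightarrow> F_E_from E Y v = {}"
  by (auto simp: F_E_from_def F_E_def)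

lemma Cons_in_F_E_from_iff:
  "e # \<delta> \<in> F_E_from E Y v \<longleftrightarrow> e \<in> src_inv E v \<and> v \<notin> Y \<and>
     (if \<delta> = [] then rng E e \<in> Y else \<delta> \<in> F_E_from E Y (rng E e))"
  by (cases "\<delta> = []") (auto simp: F_E_from_def F_E_iff epath_Cons src_inv_def)

lemma Cons_in_F_E_from:
  assumes "e \<in> edges E" "src E e \<notin> Y" "rng E e \<in> Y \<or> F_E_from E Y (rng E e) \<noteq> {}"
  obtains \<delta> where "e # \<delta> \<in> F_E_from E Y (src E e)"
proof -
  from assms(3) consider "rng E e \<in> Y" | \<delta> where "\<delta> \<in> F_E_from E Y (rng E e)"
    by blast
  then show thesis
  proof cases
    case 1
    with assms show thesis
      by (intro that[of "[]"]) (simp add: Cons_in_F_E_from_iff src_inv_def)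
  next
    case (2 \<delta>)
    then have "\<delta> \<noteq> []"
      by (auto simp: F_E_from_def dest: F_E_not_Nil)
    with 2 assms show thesis
      by (intro that[of \<delta>]) (simp add: Cons_in_F_E_from_iff src_inv_def)
  qed
qed

lemma F_E_from_subset:
  "F_E_from E Y v \<subseteq> (\<lambda>e. [e]) ` src_inv E v \<union> (\<Union>e\<in>src_inv E v. (#) e ` F_E_from E Y (rng E e))"
proof
  fix \<gamma> assume \<gamma>: "\<gamma> \<in> F_E_from E Y v"
  then have "\<gamma> \<noteq> []"
    by (auto simp: F_E_from_def dest: F_E_not_Nil)
  with \<gamma> show "\<gamma> \<in> (\<lambda>e. [e]) ` src_inv E v \<union> (\<Union>e\<in>src_inv E v. (#) e ` F_E_from E Y (rng E e))"
    by (cases \<gamma>) (auto simp: Cons_in_F_E_from_iff split: if_splits)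
qed

lemma finite_F_E_from:
  "finite (src_inv E v) \<Longrightarrow> (\<And>e. e \<in> src_inv E v \<Longrightarrow> finite (F_E_from E Y (rng E e)))
    \<Longrightarrow> finite (F_E_from E Y v)"
  by (rule finite_subset[OF F_E_from_subset]) auto

lemma F_E_append:
  assumes "\<alpha> \<in> F_E E H" "Y \<subseteq> H" "\<delta> \<in> F_E_from E Y (rng E (last \<alpha>))"
  shows "\<alpha> @ \<delta> \<in> F_E E Y"
  using assms F_E_not_Nil[of \<delta>] by (auto simp: F_E_from_def F_E_iff epath_append)

lemma F_E_split:
  assumes "\<gamma> \<in> F_E E Y" "Y \<subseteq> H" "src E (hd \<gamma>) \<notin> H"
  obtains \<alpha> \<delta> where "\<gamma> = \<alpha> @ \<delta>" "\<alpha> \<in> F_E E H" "\<delta> = [] \<or> \<delta> \<in> F_E_from E Y (rng E (last \<alpha>))"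
  using assms
proof (induction \<gamma> arbitrary: thesis)
  case (Cons e \<gamma>)
  show ?case
  proof (cases "\<gamma> = [] \<or> rng E e \<in> H")
    case True
    with Cons.prems show ?thesis
      by (intro Cons.prems(1)[of "[e]" \<gamma>])
         (auto simp: F_E_from_def F_E_iff epath_Cons)
  next
    case False
    with Cons.prems have "\<gamma> \<in> F_E E Y" "src E (hd \<gamma>) \<notin> H" and e: "e \<in> edges E" "rng E e = src E (hd \<gamma>)"
      by (auto simp: F_E_iff epath_Cons)
    then obtain \<alpha> \<delta> where "\<gamma> = \<alpha> @ \<delta>" "\<alpha> \<in> F_E E H" "\<delta> = [] \<or> \<delta> \<in> F_E_from E Y (rng E (last \<alpha>))"
      using Cons.IH Cons.prems(3) by blast
    with Cons.prems e show ?thesis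
      by (intro Cons.prems(1)[of "e # \<alpha>" \<delta>]) (auto simp: F_E_iff epath_Cons dest: F_E_not_Nil)
  qed
qed (blast dest: F_E_not_Nil)

lemma sat_closure_least:
  "S \<subseteq> verts E \<Longrightarrow> Y \<subseteq> S \<Longrightarrow> hereditary E S \<Longrightarrow> saturated E S \<Longrightarrow> sat_closure E Y \<subseteq> S"
  unfolding sat_closure_def by blast

lemma subset_sat_closure: "Y \<subseteq> sat_closure E Y"
  unfolding sat_closure_def by blast

lemma sat_closure_induct [consumes 4, case_names base step]:
  assumes "wf_graph E" "Y \<subseteq> verts E" "hereditary E Y" "w \<in> sat_closure E Y"
    and Q_Y: "\<And>y. y \<in> Y \<Longrightarrow> Q y"
    and Q_regular: "\<And>v. v \<in> verts E \<Longrightarrow> regular E v \<Longrightarrow> (\<And>e. e \<in> src_inv E v \<Longrightarrow> Q (rng E e)) \<Longrightarrow> Q v"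
  shows "Q w"
proof -
  define R where "R = {(src E e, rng E e) | e. e \<in> edges E}"
  \<comment> \<open>\<open>Q\<close> itself need not be hereditary, but the set of vertices all of whose descendants satisfy it is.\<close>
  define S where "S = {v \<in> verts E. \<forall>u. (v, u) \<in> R\<^sup>* \<longrightarrow> Q u}"
  have "S \<subseteq> verts E"
    by (auto simp: S_def)
  moreover have "Y \<subseteq> S"
  proof
    fix y assume "y \<in> Y"
    have "u \<in> Y" if "(y, u) \<in> R\<^sup>*" for u
      using that \<open>y \<in> Y\<close> assms(3)
      by (induction rule: rtrancl_induct) (auto simp: R_def hereditary_iff_edges)
    then show "y \<in> S"
      using Q_Y assms(2) \<open>y \<in> Y\<close> by (auto simp: S_def)
  qed
  moreover have "hereditary E S"
    unfolding hereditary_iff_edges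
  proof (intro ballI impI)
    fix e assume e: "e \<in> edges E" "src E e \<in> S"
    then have "(src E e, rng E e) \<in> R"
      by (auto simp: R_def)
    then have "(src E e, u) \<in> R\<^sup>*" if "(rng E e, u) \<in> R\<^sup>*" for u
      using that by (rule converse_rtrancl_into_rtrancl)
    with e assms(1) show "rng E e \<in> S"
      by (simp add: S_def wf_graph_def)
  qed
  moreover have "saturated E S"
    unfolding saturated_def
  proof (intro ballI impI)
    fix v assume v: "v \<in> verts E" "regular E v \<and> rng E ` src_inv E v \<subseteq> S"
    have "Q u" if "(v, u) \<in> R\<^sup>*" for u
      using that
    proof (cases rule: converse_rtranclE)
      case base
      have "Q v"
        by (rule Q_regular) (use v in \<open>auto simp: S_def\<close>)
      with base show ?thesis
        by simp
    next
      case (step x)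
      then obtain e where "e \<in> src_inv E v" "x = rng E e"
        by (auto simp: R_def src_inv_def)
      with step(2) v show ?thesis
        by (auto simp: S_def)
    qed
    with v(1) show "v \<in> S"
      by (simp add: S_def)
  qed
  ultimately have "sat_closure E Y \<subseteq> S"
    by (rule sat_closure_least)
  with assms(4) show ?thesis
    by (auto simp: S_def)
qed

lemma condition_F_iff_if_B_H_empty:
  fixes E :: "('v, 'e) dgraph"
  assumes "B_H E H = {}"
  shows "condition_F E H \<longleftrightarrow> finite H \<and> finite (F_E E H)"
proof -
  have sets: "{(v, []) | v. v \<in> H} = (\<lambda>v. (v, [] :: 'e list)) ` H"
    "{(src E (hd \<alpha>), \<alpha>) | \<alpha>. \<alpha> \<in> F'_E E H} = (\<lambda>\<alpha>. (src E (hd \<alpha>), \<alpha>)) ` F_E E H"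
    "{p \<in> Path E. prange E p \<in> B_H E H} = {}"
    using assms by (auto simp: F'_E_def)
  have fin: "finite ((\<lambda>v. (v, [] :: 'e list)) ` H) \<longleftrightarrow> finite H"
    "finite ((\<lambda>\<alpha>. (src E (hd \<alpha>), \<alpha>)) ` F_E E H) \<longleftrightarrow> finite (F_E E H)"
    by (auto intro!: finite_image_iff inj_onI)
  show ?thesis
    by (simp only: condition_F_def sets fin finite_Un finite.emptyI simp_thms)
qed

context
  fixes E :: "('v, 'e) dgraph" and Y :: "'v set"
  assumes wf: "wf_graph E" and Y_verts: "Y \<subseteq> verts E" and Y_hereditary: "hereditary E Y"
begin

lemma finite_F_E_from_sat_closure:
  assumes "v \<in> sat_closure E Y"
  shows "finite (F_E_from E Y v)"
  using wf Y_verts Y_hereditary assms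
  by (induction rule: sat_closure_induct)
     (auto simp: F_E_from_eq_empty regular_def intro: finite_F_E_from)

lemma sat_closure_reaches:
  assumes "v \<in> sat_closure E Y"
  shows "v \<in> Y \<or> F_E_from E Y v \<noteq> {}"
  using wf Y_verts Y_hereditary assms
proof (induction rule: sat_closure_induct)
  case (step v)
  obtain e where "e \<in> src_inv E v"
    using step.hyps(2) by (auto simp: regular_def)
  with step.IH[of e] show ?case
    by (cases "v \<in> Y") (auto simp: src_inv_def elim: Cons_in_F_E_from)
qed simp

lemma finite_sat_closure:
  assumes "finite Y" "finite (F_E E Y)"
  shows "finite (sat_closure E Y)"
proof -
  have "sat_closure E Y \<subseteq> Y \<union> (\<lambda>\<gamma>. src E (hd \<gamma>)) ` F_E E Y"
    using sat_closure_reaches by (fastforce simp: F_E_from_def)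
  then show ?thesis
    using assms by (simp add: finite_subset)
qed

lemma B_H_sat_closure_eq_empty:
  assumes "finite (F_E E Y)"
  shows "B_H E (sat_closure E Y) = {}"
proof -
  let ?H = "sat_closure E Y"
  show ?thesis
  proof (rule equals0I)
    fix v assume v: "v \<in> B_H E ?H"
    have "v \<notin> Y"
      using v subset_sat_closure[of Y E] by (auto simp: B_H_def)
    have "{e \<in> src_inv E v. rng E e \<in> ?H} \<subseteq> hd ` F_E E Y"
    proof
      fix e assume e: "e \<in> {e \<in> src_inv E v. rng E e \<in> ?H}"
      then obtain \<delta> where "e # \<delta> \<in> F_E_from E Y v"
        using sat_closure_reaches \<open>v \<notin> Y\<close>
        by (auto simp: src_inv_def elim!: Cons_in_F_E_from)
      then show "e \<in> hd ` F_E E Y"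
        by (force simp: F_E_from_def)
    qed
    then have "finite {e \<in> src_inv E v. rng E e \<in> ?H}"
      using assms finite_subset by blast
    moreover have "finite {e \<in> src_inv E v. rng E e \<notin> ?H}"
      using v by (simp add: B_H_def)
    ultimately have "finite ({e \<in> src_inv E v. rng E e \<in> ?H} \<union> {e \<in> src_inv E v. rng E e \<notin> ?H})"
      by simp
    then have "finite (src_inv E v)"
      by (rule finite_subset[rotated]) auto
    with v show False
      by (simp add: B_H_def Inf_emitters_def)
  qed
qed

lemma finite_F_E_sat_closure:
  assumes "finite (F_E E Y)"
  shows "finite (F_E E (sat_closure E Y))"
proof -
  let ?H = "sat_closure E Y"
  have extends: "\<exists>\<delta>. \<alpha> @ \<delta> \<in> F_E E Y" if \<alpha>: "\<alpha> \<in> F_E E ?H" for \<alpha>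
  proof -
    have "rng E (last \<alpha>) \<in> ?H"
      using \<alpha> by (simp add: F_E_iff)
    then consider "rng E (last \<alpha>) \<in> Y" | \<delta> where "\<delta> \<in> F_E_from E Y (rng E (last \<alpha>))"
      using sat_closure_reaches by blast
    then show ?thesis
    proof cases
      case 1
      then have "\<alpha> @ [] \<in> F_E E Y"
        using \<alpha> subset_sat_closure[of Y E] by (auto simp: F_E_iff)
      then show ?thesis ..
    next
      case 2
      then show ?thesis
        using F_E_append[OF \<alpha> subset_sat_closure] by blast
    qed
  qed
  have "F_E E ?H \<subseteq> (\<Union>\<gamma>\<in>F_E E Y. (\<lambda>k. take k \<gamma>) ` {..length \<gamma>})"
  proof
    fix \<alpha> assume "\<alpha> \<in> F_E E ?H"
    then obtain \<delta> where "\<alpha> @ \<delta> \<in> F_E E Y"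
      using extends by blast
    then show "\<alpha> \<in> (\<Union>\<gamma>\<in>F_E E Y. (\<lambda>k. take k \<gamma>) ` {..length \<gamma>})"
      by (intro UN_I[of "\<alpha> @ \<delta>"] image_eqI[of _ _ "length \<alpha>"]) auto
  qed
  then show ?thesis
    by (rule finite_subset) (simp add: assms)
qed

lemma finite_F_E_if_finite_sat_closure:
  assumes "finite (sat_closure E Y)" "finite (F_E E (sat_closure E Y))"
  shows "finite (F_E E Y)"
proof -
  let ?H = "sat_closure E Y"
  have "F_E E Y \<subseteq> (\<Union>w\<in>?H. F_E_from E Y w)
      \<union> (\<Union>\<alpha>\<in>F_E E ?H. insert \<alpha> ((@) \<alpha> ` F_E_from E Y (rng E (last \<alpha>))))"
  proof
    fix \<gamma> assume \<gamma>: "\<gamma> \<in> F_E E Y"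
    show "\<gamma> \<in> (\<Union>w\<in>?H. F_E_from E Y w) \<union> (\<Union>\<alpha>\<in>F_E E ?H. insert \<alpha> ((@) \<alpha> ` F_E_from E Y (rng E (last \<alpha>))))"
    proof (cases "src E (hd \<gamma>) \<in> ?H")
      case True
      moreover have "\<gamma> \<in> F_E_from E Y (src E (hd \<gamma>))"
        using \<gamma> by (simp add: F_E_from_def)
      ultimately show ?thesis by blast
    next
      case False
      with \<gamma> subset_sat_closure[of Y E] obtain \<alpha> \<delta> where "\<gamma> = \<alpha> @ \<delta>" "\<alpha> \<in> F_E E ?H"
          "\<delta> = [] \<or> \<delta> \<in> F_E_from E Y (rng E (last \<alpha>))"
        by (rule F_E_split)
      then show ?thesis by blast
    qed
  qed
  moreover have "finite (\<Union>w\<in>?H. F_E_from E Y w)"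
    using assms(1) finite_F_E_from_sat_closure by blast
  moreover have "finite (\<Union>\<alpha>\<in>F_E E ?H. insert \<alpha> ((@) \<alpha> ` F_E_from E Y (rng E (last \<alpha>))))"
    using assms(2) finite_F_E_from_sat_closure by (simp add: F_E_iff)
  ultimately show ?thesis
    by (meson finite_Un finite_subset)
qed

theorem finite_F_E_iff_condition_F:
  assumes "finite Y"
  shows "finite (F_E E Y) \<longleftrightarrow> condition_F E (sat_closure E Y) \<and> B_H E (sat_closure E Y) = {}"
proof
  assume "finite (F_E E Y)"
  with assms show "condition_F E (sat_closure E Y) \<and> B_H E (sat_closure E Y) = {}"
    by (simp add: B_H_sat_closure_eq_empty condition_F_iff_if_B_H_empty finite_sat_closure
        finite_F_E_sat_closure)
next
  assume "condition_F E (sat_closure E Y) \<and> B_H E (sat_closure E Y) = {}"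
  then show "finite (F_E E Y)"
    using condition_F_iff_if_B_H_empty finite_F_E_if_finite_sat_closure by blast
qed

end

lemma rng_cycle_edge_in_cycle_verts:
  assumes "is_cycle E c" "i < length c"
  shows "rng E (c ! i) \<in> cycle_verts E c"
proof (cases "Suc i < length c")
  case True
  then have "rng E (c ! i) = src E (c ! Suc i)"
    using assms(1) by (simp add: is_cycle_def epath_def)
  with True show ?thesis
    by (simp add: cycle_verts_def)
next
  case False
  with assms(2) have "c \<noteq> []" "i = length c - 1"
    by auto
  then have "c ! i = last c"
    by (simp add: last_conv_nth)
  with assms(1) \<open>c \<noteq> []\<close> show ?thesis
    by (simp add: is_cycle_def cycle_verts_def)
qed

lemma hereditary_cycle_verts:
  assumes "is_cycle E c" "no_exits E c"
  shows "hereditary E (cycle_verts E c)"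
  unfolding hereditary_iff_edges
proof (intro ballI impI)
  fix e assume e: "e \<in> edges E" "src E e \<in> cycle_verts E c"
  then obtain i where i: "i < length c" "src E e = src E (c ! i)"
    by (auto simp: cycle_verts_def in_set_conv_nth)
  with e assms(2) have "e = c ! i"
    unfolding no_exits_def is_exit_def by blast
  with assms(1) i show "rng E e \<in> cycle_verts E c"
    by (simp add: rng_cycle_edge_in_cycle_verts)
qed

lemma cycle_verts_subset_verts:
  "wf_graph E \<Longrightarrow> is_cycle E c \<Longrightarrow> cycle_verts E c \<subseteq> verts E"
  by (auto simp: wf_graph_def is_cycle_def epath_def cycle_verts_def)

theorem lemma2p5:
  fixes E :: "('v, 'e) dgraph" and c :: "'e list"
  assumes "wf_graph E"
    and "is_cycle E c"
    and "no_exits E c"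
  shows "finite (F_E E (cycle_verts E c)) \<longleftrightarrow>
    (condition_F E (sat_closure E (cycle_verts E c)) \<and>
     B_H E (sat_closure E (cycle_verts E c)) = {})"
  using finite_F_E_iff_condition_F[OF assms(1) cycle_verts_subset_verts[OF assms(1,2)]
      hereditary_cycle_verts[OF assms(2,3)]]
  by (simp add: cycle_verts_def)

end
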